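(* Let $X$ be a compact, locally path connected, simply connected topological space, let $n$ be a positive integer, and let $\phi:X\to X$ be a homeomorphism of order $n$ (i.e. $\phi^n=\mathrm{id}$). Let $\lambda\neq 1$ be an $n$-th root of unity. Then for every continuous function $f:X\to\mathbb{C}$ there is a point $x\in X$ such that $\sum_{i=0}^{n-1}\lambda^i f(\phi^i(x))=0$. *)

theory Defs
  imports "HOL-Analysis.Analysis"
begin

end

theory Submission
  imports Defs
begin

text \<open>Suppose \<open>g x = \<Sum>i<n. \<lambda>\<^sup>i f(\<phi>\<^sup>i x)\<close> never vanishes. Shifting the sum gives
  \<open>g = \<lambda> \<cdot> (g \<circ> \<phi>)\<close>. Take a path \<open>\<gamma>\<close> from a point \<open>z\<close> to \<open>\<phi> z\<close> and a logarithm
  \<open>L\<close> of \<open>g\<close> along it; then \<open>c = L(0) - L(1)\<close> satisfies \<open>exp c = \<lambda>\<close>. The loop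
  \<open>\<gamma>, \<phi>\<circ>\<gamma>, \<dots>, \<phi>\<^sup>n\<^sup>-\<^sup>1\<circ>\<gamma>\<close> has the logarithm \<open>L, L - c, \<dots>, L - (n-1)c\<close>, which gains \<open>-nc\<close>
  around it. The loop is null-homotopic, so this logarithm must close up: \<open>nc = 0\<close>, hence
  \<open>\<lambda> = 1\<close>.\<close>

lemma funpow_translation: "(\<lambda>w::'a::ring_1. w - c) ^^ m = (\<lambda>w. w - of_nat m * c)"
  by (induction m) (auto simp: algebra_simps)

lemma funpow_image_subset: "\<phi> ` S \<subseteq> S \<Longrightarrow> (\<phi> ^^ i) ` S \<subseteq> S"
  by (induction i) auto

lemma continuous_on_funpow:
  assumes "continuous_on S \<phi>" "\<phi> ` S \<subseteq> S"
  shows "continuous_on S (\<phi> ^^ i)"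
proof (induction i)
  case (Suc i)
  then show ?case
    using continuous_on_compose2[OF assms(1) Suc.IH funpow_image_subset[OF assms(2)]] by simp
qed simp

lemma twisted_orbit_sum_shift:
  fixes lam :: "'b::comm_ring_1"
  assumes "(\<phi> ^^ n) x = x" "lam ^ n = 1"
  shows "(\<Sum>i<n. lam ^ i * f ((\<phi> ^^ i) x)) = lam * (\<Sum>i<n. lam ^ i * f ((\<phi> ^^ i) (\<phi> x)))"
proof -
  define a where "a i = lam ^ i * f ((\<phi> ^^ i) x)" for i
  have "lam * (\<Sum>i<n. lam ^ i * f ((\<phi> ^^ i) (\<phi> x))) = (\<Sum>i<n. a (Suc i))"
    by (simp add: a_def sum_distrib_left funpow_Suc_right mult.assoc del: funpow.simps)
  also have "\<dots> = (\<Sum>i<Suc n. a i) - a 0"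
    by (subst sum.lessThan_Suc_shift) simp
  also have "\<dots> = (\<Sum>i<n. a i) + a n - a 0"
    by simp
  also have "a n = a 0"
    using assms by (simp add: a_def)
  finally show ?thesis
    by (simp add: a_def)
qed

fun orbit_path :: "('a::topological_space \<Rightarrow> 'a) \<Rightarrow> (real \<Rightarrow> 'a) \<Rightarrow> nat \<Rightarrow> real \<Rightarrow> 'a" where
  "orbit_path \<phi> \<gamma> 0 = \<gamma>"
| "orbit_path \<phi> \<gamma> (Suc m) = \<gamma> +++ (\<phi> \<circ> orbit_path \<phi> \<gamma> m)"

lemma pathstart_orbit_path [simp]: "pathstart (orbit_path \<phi> \<gamma> m) = pathstart \<gamma>"
  by (cases m) auto

lemma path_orbit_path:
  fixes \<phi> :: "'a::topological_space \<Rightarrow> 'a"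
  assumes "continuous_on S \<phi>" "\<phi> ` S \<subseteq> S"
    and "path \<gamma>" "path_image \<gamma> \<subseteq> S" "pathfinish \<gamma> = \<phi> (pathstart \<gamma>)"
  shows "path (orbit_path \<phi> \<gamma> m) \<and> path_image (orbit_path \<phi> \<gamma> m) \<subseteq> S \<and>
         pathfinish (orbit_path \<phi> \<gamma> m) = (\<phi> ^^ Suc m) (pathstart \<gamma>)"
proof (induction m)
  case 0
  then show ?case using assms by simp
next
  case (Suc m)
  let ?\<Gamma> = "orbit_path \<phi> \<gamma> m"
  have "path (\<phi> \<circ> ?\<Gamma>)"
    using Suc assms(1) by (blast intro: path_continuous_image continuous_on_subset)
  moreover have "path_image (\<phi> \<circ> ?\<Gamma>) \<subseteq> S"
    using Suc assms(2) by (auto simp: path_image_compose)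
  ultimately show ?case
    using Suc assms(3-5) by (simp add: pathstart_compose pathfinish_compose funpow_swap1 subset_path_image_join)
qed

lemma orbit_path_lift:
  assumes lift: "\<And>w y. y \<in> S \<Longrightarrow> p w = g y \<Longrightarrow> p (\<psi> w) = g (\<phi> y)"
    and "\<phi> ` S \<subseteq> S" "path_image \<gamma> \<subseteq> S"
    and L: "\<And>t. t \<in> {0..1} \<Longrightarrow> p (L t) = g (\<gamma> t)"
    and "t \<in> {0..1}"
  shows "p (orbit_path \<psi> L m t) = g (orbit_path \<phi> \<gamma> m t)
         \<and> orbit_path \<phi> \<gamma> m t \<in> S"
  using \<open>t \<in> {0..1}\<close>
proof (induction m arbitrary: t)
  case 0
  then show ?case using L assms(3) by (auto simp: path_image_def)
next
  case (Suc m)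
  show ?case
  proof (cases "t \<le> 1/2")
    case True
    then show ?thesis
      using Suc.prems L assms(3) by (auto simp: joinpaths_def path_image_def)
  next
    case False
    then have "2 * t - 1 \<in> {0..1}" using Suc.prems by auto
    from Suc.IH[OF this] show ?thesis
      using False lift assms(2) by (auto simp: joinpaths_def)
  qed
qed

lemma exp_lift_of_loop_closed:
  fixes Q :: "real \<Rightarrow> 'a::topological_space" and g :: "'a \<Rightarrow> complex"
  assumes "simply_connected S" "path Q" "path_image Q \<subseteq> S" "pathfinish Q = pathstart Q"
    and "continuous_on S g" "\<And>x. x \<in> S \<Longrightarrow> g x \<noteq> 0"
    and "path \<Lambda>" "\<And>t. t \<in> {0..1} \<Longrightarrow> exp (\<Lambda> t) = g (Q t)"
  shows "pathfinish \<Lambda> = pathstart \<Lambda>"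
proof -
  let ?z = "pathstart Q"
  have "?z \<in> S"
    using assms(3) pathstart_in_path_image by blast
  then have "path (\<lambda>t::real. ?z) \<and> pathfinish (\<lambda>t::real. ?z) = pathstart (\<lambda>t::real. ?z)
             \<and> path_image (\<lambda>t::real. ?z) \<subseteq> S"
    by (simp add: path_def pathstart_def pathfinish_def path_image_def)
  then have "homotopic_loops S Q (\<lambda>t. ?z)"
    using assms(1-4) unfolding simply_connected_def by blast
  then have "homotopic_loops (- {0}) (g \<circ> Q) (g \<circ> (\<lambda>t. ?z))"
    by (rule homotopic_loops_continuous_image) (use assms(5,6) in auto)
  moreover have "g \<circ> (\<lambda>t. ?z) = linepath (g ?z) (g ?z)"
    by (auto simp: linepath_def fun_eq_iff algebra_simps)
  ultimately have hom: "homotopic_paths (- {0}) (g \<circ> Q) (linepath (g ?z) (g ?z))"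
    using homotopic_loops_imp_homotopic_paths_null[of "- {0}" "g \<circ> Q" "g ?z"]
    by (simp add: pathstart_compose)
  have start: "exp (pathstart \<Lambda>) = g ?z"
    using assms(8)[of 0] by (simp add: pathstart_def)
  have "pathfinish \<Lambda> = pathfinish (linepath (pathstart \<Lambda>) (pathstart \<Lambda>))"
  proof (rule covering_space_monodromy[OF covering_space_exp_punctured_plane _ _ _ _ hom \<open>path \<Lambda>\<close>])
    show "path (g \<circ> Q)" "path_image (g \<circ> Q) \<subseteq> - {0}"
      using hom homotopic_paths_imp_path homotopic_paths_imp_subset by blast+
  qed (use assms(6,8) start \<open>?z \<in> S\<close> in \<open>auto simp: linepath_def algebra_simps path_const pathstart_def\<close>)
  then show ?thesis
    by simp
qed

lemma twisted_invariant_multiplier_eq_1: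
  fixes \<phi> :: "'a::topological_space \<Rightarrow> 'a" and g :: "'a \<Rightarrow> complex"
  assumes S: "path_connected S" "simply_connected S"
    and \<phi>: "continuous_on S \<phi>" "\<phi> ` S \<subseteq> S"
    and z: "z \<in> S" "(\<phi> ^^ n) z = z" and "n > 0"
    and g: "continuous_on S g" "\<And>x. x \<in> S \<Longrightarrow> g x \<noteq> 0"
    and twisted: "\<And>x. x \<in> S \<Longrightarrow> g x = lam * g (\<phi> x)"
  shows "lam = 1"
proof -
  obtain \<gamma> where \<gamma>: "path \<gamma>" "path_image \<gamma> \<subseteq> S" "pathstart \<gamma> = z" "pathfinish \<gamma> = \<phi> z"
    using S(1) z(1) \<phi>(2) unfolding path_connected_def by blast
  have "path (g \<circ> \<gamma>)"
    using \<gamma> g(1) by (blast intro: path_continuous_image continuous_on_subset)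
  moreover have "path_image (g \<circ> \<gamma>) \<subseteq> - {0}"
    using \<gamma>(2) g(2) by (auto simp: path_image_compose)
  moreover have "pathstart (g \<circ> \<gamma>) = exp (Ln (g z))"
    using \<gamma>(3) g(2) z(1) by (simp add: pathstart_compose)
  ultimately obtain L where L: "path L"
    and exp_L: "\<And>t. t \<in> {0..1} \<Longrightarrow> exp (L t) = g (\<gamma> t)"
    using covering_space_lift_path_strong[OF covering_space_exp_punctured_plane, of "Ln (g z)" "g \<circ> \<gamma>"]
    by auto
  define c where "c = pathstart L - pathfinish L"
  have "exp (pathstart L) = g z" "exp (pathfinish L) = g (\<phi> z)"
    using exp_L[of 0] exp_L[of 1] \<gamma>(3,4) by (auto simp: pathstart_def pathfinish_def)
  then have exp_c: "exp c = lam"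
    using twisted[OF z(1)] g(2) \<phi>(2) z(1) by (auto simp: c_def exp_diff)
  define \<psi> :: "complex \<Rightarrow> complex" where "\<psi> w = w - c" for w
  have lift_step: "exp (\<psi> w) = g (\<phi> y)" if "y \<in> S" "exp w = g y" for w y
    using that twisted[of y] exp_c by (auto simp: \<psi>_def exp_diff)
  obtain m where n: "n = Suc m"
    using \<open>n > 0\<close> gr0_implies_Suc by blast
  let ?Q = "orbit_path \<phi> \<gamma> m" and ?\<Lambda> = "orbit_path \<psi> L m"
  have Q: "path ?Q" "path_image ?Q \<subseteq> S" "pathfinish ?Q = pathstart ?Q"
    using path_orbit_path[OF \<phi> \<gamma>(1,2), of m] \<gamma>(3,4) z(2) n by auto
  have "continuous_on UNIV \<psi>"
    unfolding \<psi>_def by (intro continuous_intros)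
  moreover have "pathfinish L = \<psi> (pathstart L)"
    by (simp add: \<psi>_def c_def)
  ultimately have "path ?\<Lambda>" "pathfinish ?\<Lambda> = (\<psi> ^^ n) (pathstart L)"
    using path_orbit_path[of UNIV \<psi> L m] L n by auto
  moreover have "\<psi> = (\<lambda>w. w - c)"
    by (simp add: \<psi>_def fun_eq_iff)
  ultimately have \<Lambda>: "path ?\<Lambda>" "pathfinish ?\<Lambda> = pathstart L - of_nat n * c"
    by (simp_all add: funpow_translation)
  have "pathfinish ?\<Lambda> = pathstart ?\<Lambda>"
  proof (rule exp_lift_of_loop_closed[OF S(2) Q g \<Lambda>(1)])
    show "exp (?\<Lambda> t) = g (?Q t)" if "t \<in> {0..1}" for t
      using orbit_path_lift[of S exp g \<psi> \<phi>, OF lift_step \<phi>(2) \<gamma>(2) exp_L that] by blast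
  qed
  then have "c = 0"
    using \<Lambda>(2) \<open>n > 0\<close> by simp
  then show "lam = 1"
    using exp_c by simp
qed

theorem corollary1:
  fixes X :: "'a::topological_space set"
    and \<phi> :: "'a \<Rightarrow> 'a"
    and n :: nat
    and lam :: complex
    and f :: "'a \<Rightarrow> complex"
  assumes "compact X"
    and "locally path_connected X"
    and "X \<noteq> {}" and "path_connected X" and "simply_connected X"
    and "n > 0"
    and "\<exists>\<psi>. homeomorphism X X \<phi> \<psi>"
    and "\<forall>x\<in>X. (\<phi> ^^ n) x = x"
    and "lam ^ n = 1" and "lam \<noteq> 1"
    and "continuous_on X f"
  shows "\<exists>x\<in>X. (\<Sum>i<n. lam ^ i * f ((\<phi> ^^ i) x)) = 0"
proof (rule ccontr)
  assume no_zero: "\<not> ?thesis"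
  define g where "g x = (\<Sum>i<n. lam ^ i * f ((\<phi> ^^ i) x))" for x
  obtain \<psi> where "homeomorphism X X \<phi> \<psi>"
    using assms(7) by blast
  then have \<phi>: "continuous_on X \<phi>" "\<phi> ` X \<subseteq> X"
    by (auto simp: homeomorphism_def)
  have "continuous_on X g"
    unfolding g_def
    by (intro continuous_intros continuous_on_compose2[OF assms(11) continuous_on_funpow[OF \<phi>]]
        funpow_image_subset[OF \<phi>(2)])
  moreover obtain z where "z \<in> X"
    using assms(3) by blast
  moreover have "g x = lam * g (\<phi> x)" if "x \<in> X" for x
    using twisted_orbit_sum_shift[where \<phi> = \<phi> and f = f] assms(8,9) that by (simp add: g_def)
  ultimately have "lam = 1"
    using twisted_invariant_multiplier_eq_1[OF assms(4,5) \<phi>] assms(6,8) no_zero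
    by (auto simp: g_def)
  with assms(10) show False ..
qed

end
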